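(* Suppose the ST problem for $(D_{SC},F,B)$ has a positive answer. Then there is a solution $\{\pi(v): v \text{ a source of } D_{SC}\}$ such that (a) $\pi(u_{i,j})=P_{i,j}$ for every $i\in\mathcal U$ and $j\in I_i$, and (b) for every $t\in\{1,\dots,k\}$ there is $l\in\{1,\dots,m\}$ with $\pi(z_t)=(z_t,z)\circ P^h_l$ (concatenation of the arc $(z_t,z)$ with the horizontal path $P^h_l$).
   Context: Snow Team problem (ST): given a digraph $D=(\mathcal V,\mathcal A)$ whose underlying graph is connected, and $F:\mathcal V\to\{0,1\}$, $B:\mathcal V\to\mathbb N$, with $\mathbf k_B=\sum_vB(v)$: do there exist $\mathbf k_B$ directed walks, exactly $B(v)$ of which start at each $v$, such that, letting $H$ be the subgraph consisting of the vertices and arcs of these walks, all vertices of $F^{-1}(1)$ lie in one connected component of the underlying undirected graph of $H$? Such walks form a solution. Construction: $\mathcal U=\{1,\dots,n\}$, $\mathcal S=\{S_1,\dots,S_m\}$ with $S_t\subseteq\mathcal U$, $\bigcup_tS_t=\mathcal U$, and $1\le k\le m$. Write $S_t=\{x_1<\dots<x_{\ell(t)}\}$ and $I_i=\{j: i\in S_j\}$. The digraph $D_{SC}$ has vertices $u_i$ ($i\in\mathcal U$); $u_{i,j},u'_{i,j},v_{i,j},v'_{i,j}$ ($i\in\mathcal U$, $j\in I_i$); and $z,z_1,\dots,z_k$. Its arcs are those of the vertical paths $P_{i,j}=(u_{i,j},u_i,u'_{i,j},v_{i,j},v'_{i,j})$ ($i\in\mathcal U,j\in I_i$), of the horizontal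 paths $P^h_t=(z,v_{x_1,t},v_{x_2,t},\dots,v_{x_{\ell(t)},t})$ ($t\in\{1,\dots,m\}$, with $x_1<\dots<x_{\ell(t)}$ the elements of $S_t$), and the arcs $(z_l,z)$ for $l=1,\dots,k$. Set $F(v)=1$ for all vertices $v$, and $B(v)=1$ if $v$ is a source of $D_{SC}$ (i.e. $v\in\{u_{i,j}\}\cup\{z_1,\dots,z_k\}$) and $B(v)=0$ otherwise. Since $D_{SC}$ is acyclic, every solution consists of one directed path $\pi(v)$ starting at each source $v$. *)

theory Defs
  imports Main
begin

definition is_walk :: "'a set \<Rightarrow> ('a \<times> 'a) set \<Rightarrow> 'a list \<Rightarrow> bool" where
  "is_walk V A w \<longleftrightarrow> w \<noteq> [] \<and> set w \<subseteq> V \<and> (\<forall>i. Suc i < length w \<longrightarrow> (w ! i, w ! Suc i) \<in> A)"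

definition walk_arcs :: "'a list \<Rightarrow> ('a \<times> 'a) set" where
  "walk_arcs w = {(w ! i, w ! Suc i) | i. Suc i < length w}"

text \<open>A family of walks W: for each vertex v and each index i < B v, W v i is the
i-th walk starting at v (so exactly B v walks start at v, k_B in total).\<close>
definition H_vertices :: "'a set \<Rightarrow> ('a \<Rightarrow> nat) \<Rightarrow> ('a \<Rightarrow> nat \<Rightarrow> 'a list) \<Rightarrow> 'a set" where
  "H_vertices V B W = (\<Union>v\<in>V. \<Union>i<B v. set (W v i))"

definition H_arcs :: "'a set \<Rightarrow> ('a \<Rightarrow> nat) \<Rightarrow> ('a \<Rightarrow> nat \<Rightarrow> 'a list) \<Rightarrow> ('a \<times> 'a) set" where
  "H_arcs V B W = (\<Union>v\<in>V. \<Union>i<B v. walk_arcs (W v i))"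

definition st_solution ::
  "'a set \<Rightarrow> ('a \<times> 'a) set \<Rightarrow> ('a \<Rightarrow> nat) \<Rightarrow> ('a \<Rightarrow> nat) \<Rightarrow> ('a \<Rightarrow> nat \<Rightarrow> 'a list) \<Rightarrow> bool" where
  "st_solution V A F B W \<longleftrightarrow>
     (\<forall>v\<in>V. \<forall>i<B v. is_walk V A (W v i) \<and> hd (W v i) = v) \<and>
     (\<forall>x\<in>V. F x = 1 \<longrightarrow> x \<in> H_vertices V B W) \<and>
     (\<forall>x\<in>V. \<forall>y\<in>V. F x = 1 \<longrightarrow> F y = 1 \<longrightarrow>
        (x, y) \<in> (H_arcs V B W \<union> (H_arcs V B W)\<inverse>)\<^sup>*)"

definition st_positive ::
  "'a set \<Rightarrow> ('a \<times> 'a) set \<Rightarrow> ('a \<Rightarrow> nat) \<Rightarrow> ('a \<Rightarrow> nat) \<Rightarrow> bool" where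
  "st_positive V A F B \<longleftrightarrow> (\<exists>W. st_solution V A F B W)"

datatype vtx = U nat | UU nat nat | UU' nat nat | VV nat nat | VV' nat nat | Z | ZZ nat
  (* U i = u_i; UU i j = u_{i,j}; UU' i j = u'_{i,j}; VV i j = v_{i,j}; VV' i j = v'_{i,j};
     Z = z; ZZ l = z_l *)

definition Iset :: "nat \<Rightarrow> (nat \<Rightarrow> nat set) \<Rightarrow> nat \<Rightarrow> nat set" where
  "Iset m S i = {j \<in> {1..m}. i \<in> S j}"

definition vpath :: "nat \<Rightarrow> nat \<Rightarrow> vtx list" where
  "vpath i j = [UU i j, U i, UU' i j, VV i j, VV' i j]"

definition hpath :: "(nat \<Rightarrow> nat set) \<Rightarrow> nat \<Rightarrow> vtx list" where
  "hpath S t = Z # map (\<lambda>x. VV x t) (sorted_list_of_set (S t))"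

definition DSC_V :: "nat \<Rightarrow> nat \<Rightarrow> (nat \<Rightarrow> nat set) \<Rightarrow> nat \<Rightarrow> vtx set" where
  "DSC_V n m S k =
     U ` {1..n}
     \<union> (\<Union>i\<in>{1..n}. \<Union>j\<in>Iset m S i. set (vpath i j))
     \<union> {Z} \<union> ZZ ` {1..k}"

definition DSC_A :: "nat \<Rightarrow> nat \<Rightarrow> (nat \<Rightarrow> nat set) \<Rightarrow> nat \<Rightarrow> (vtx \<times> vtx) set" where
  "DSC_A n m S k =
     (\<Union>i\<in>{1..n}. \<Union>j\<in>Iset m S i. walk_arcs (vpath i j))
     \<union> (\<Union>t\<in>{1..m}. walk_arcs (hpath S t))
     \<union> (\<lambda>l. (ZZ l, Z)) ` {1..k}"

definition DSC_F :: "vtx \<Rightarrow> nat" where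
  "DSC_F v = 1"

definition DSC_B :: "nat \<Rightarrow> nat \<Rightarrow> (nat \<Rightarrow> nat set) \<Rightarrow> nat \<Rightarrow> vtx \<Rightarrow> nat" where
  "DSC_B n m S k v =
     (if (\<exists>i\<in>{1..n}. \<exists>j\<in>Iset m S i. v = UU i j) \<or> (\<exists>l\<in>{1..k}. v = ZZ l) then 1 else 0)"

end

theory Submission
  imports Defs
begin

text \<open>
  The potential level strictly increases along every arc of D_SC, so the walks of a solution are
  paths, and a walk from u_{x,a} can meet the vertices u'_{x,j} only at its third position. As
  there are exactly as many sources u_{x,a} as vertices u'_{x,j}, and all of the latter must be
  covered, each u'_{x,j} lies on exactly one walk. Call a column l entered if the solution uses an
  arc (z, v_{x,l}); only the k walks from z_1, ..., z_k reach z, and each enters at most one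
  column. In a column j that is not entered, the sinks v'_{x,j} can only be reached through
  u'_{x',j} with x' \<le> x, and induction on x shows that every walk through the column runs
  straight down its vertical path, so no horizontal arc of the column is used. Hence if no entered
  column contained i, the vertical paths through u_i would be a union of components of H missing z.
  The entered columns thus form a set cover of size at most k, and routing z_t along the t-th of
  these horizontal paths and u_{i,j} along P_{i,j} is again a solution.
\<close>

lemma walk_arcs_eq_set_zip: "walk_arcs w = set (zip w (tl w))"
  unfolding walk_arcs_def set_zip by (force simp: nth_tl)

lemma walk_arcs_Cons_Cons [simp]:
  "walk_arcs (a # b # xs) = insert (a, b) (walk_arcs (b # xs))"
  by (simp add: walk_arcs_eq_set_zip)

lemma walk_arcs_singleton [simp]: "walk_arcs [a] = {}"
  by (simp add: walk_arcs_eq_set_zip)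

lemma is_walk_iff_walk_arcs: "is_walk V A w \<longleftrightarrow> w \<noteq> [] \<and> set w \<subseteq> V \<and> walk_arcs w \<subseteq> A"
  unfolding is_walk_def walk_arcs_def by blast

lemma walk_arcs_mono_Cons: "walk_arcs xs \<subseteq> walk_arcs (a # xs)"
  by (cases xs) (auto simp: walk_arcs_eq_set_zip)

lemma hd_reaches_walk_vertex: "x \<in> set w \<Longrightarrow> (hd w, x) \<in> (walk_arcs w)\<^sup>*"
proof (induction w)
  case Nil then show ?case by simp
next
  case (Cons a w)
  show ?case
  proof (cases "x = a")
    case False
    with Cons.prems obtain b w' where w: "w = b # w'" "x \<in> set w" by (cases w) auto
    with Cons.IH have "(b, x) \<in> (walk_arcs w)\<^sup>*" by simp
    also have "(walk_arcs w)\<^sup>* \<subseteq> (walk_arcs (a # w))\<^sup>*"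
      by (rule rtrancl_mono[OF walk_arcs_mono_Cons])
    finally have "(b, x) \<in> (walk_arcs (a # w))\<^sup>*" .
    moreover have "(a, b) \<in> walk_arcs (a # w)" using w by simp
    ultimately show ?thesis by (simp add: converse_rtrancl_into_rtrancl)
  qed simp
qed

lemma symcl_rtrancl_sym: "(x, y) \<in> (R \<union> R\<inverse>)\<^sup>* \<Longrightarrow> (y, x) \<in> (R \<union> R\<inverse>)\<^sup>*"
  by (metis converse_Un converse_converse rtrancl_converseI sup_commute)

lemma walk_vertices_connected:
  assumes "walk_arcs w \<subseteq> R" "x \<in> set w" "y \<in> set w"
  shows "(x, y) \<in> (R \<union> R\<inverse>)\<^sup>*"
proof -
  have reach: "(hd w, z) \<in> (R \<union> R\<inverse>)\<^sup>*" if "z \<in> set w" for z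
    using hd_reaches_walk_vertex[OF that] rtrancl_mono[of "walk_arcs w" "R \<union> R\<inverse>"] assms(1) by blast
  show ?thesis using symcl_rtrancl_sym[OF reach[OF assms(2)]] reach[OF assms(3)] by (rule rtrancl_trans)
qed

lemma walk_arcs_sorted_map:
  "sorted_wrt (<) (ys :: 'a :: linorder list) \<Longrightarrow> walk_arcs (map f ys) \<subseteq> {(f a, f b) | a b. a \<in> set ys \<and> b \<in> set ys \<and> a < b}"
proof (induction ys)
  case (Cons a ys)
  show ?case
  proof (cases ys)
    case (Cons b ys')
    with Cons.IH Cons.prems show ?thesis by (simp; blast)
  qed simp
qed (simp add: walk_arcs_eq_set_zip)

lemma inj_on_if_image_covers:
  assumes "finite A" "h ` A \<subseteq> f ` A" "inj_on h A"
  shows "inj_on f A"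
proof -
  have "card A \<le> card (f ` A)"
    using card_mono[OF finite_imageI[OF assms(1)] assms(2)] card_image[OF assms(3)] by simp
  with card_image_le[OF assms(1), of f] have "card (f ` A) = card A" by linarith
  with assms(1) show ?thesis by (rule eq_card_imp_inj_on)
qed

lemma finite_set_covered_by_interval_image:
  assumes "finite A" "card A \<le> k" "A \<subseteq> B" "d \<in> B"
  obtains L where "L ` {1..k} \<subseteq> B" "A \<subseteq> L ` {1..k}"
proof -
  obtain h where h: "bij_betw h {1..card A} A" using ex_bij_betw_nat_finite_1[OF assms(1)] by blast
  define L where "L t = (if t \<le> card A then h t else d)" for t
  have "L ` {1..k} \<subseteq> B" using h assms(3,4) by (auto simp: L_def bij_betw_def)
  moreover have "A \<subseteq> L ` {1..k}"
  proof
    fix a assume "a \<in> A"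
    then obtain t where "t \<in> {1..card A}" "a = h t" using h by (metis bij_betw_def imageE)
    then show "a \<in> L ` {1..k}" using assms(2) by (auto simp: L_def intro!: image_eqI[of _ _ t])
  qed
  ultimately show ?thesis by (rule that)
qed

lemma walk_arcs_vpath [simp]:
  "walk_arcs (vpath i j) = {(UU i j, U i), (U i, UU' i j), (UU' i j, VV i j), (VV i j, VV' i j)}"
  by (simp add: vpath_def)

lemma walk_arcs_hpath:
  assumes "finite (S t)"
  shows "walk_arcs (hpath S t) \<subseteq>
    {(Z, VV x t) | x. x \<in> S t} \<union> {(VV x t, VV y t) | x y. x \<in> S t \<and> y \<in> S t \<and> x < y}"
proof (cases "sorted_list_of_set (S t)")
  case (Cons a ys)
  have "a \<in> S t" using Cons assms by (metis list.set_intros(1) set_sorted_list_of_set)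
  moreover have "walk_arcs (map (\<lambda>x. VV x t) (sorted_list_of_set (S t)))
      \<subseteq> {(VV x t, VV y t) | x y. x \<in> S t \<and> y \<in> S t \<and> x < y}"
    using walk_arcs_sorted_map[of "sorted_list_of_set (S t)" "\<lambda>x. VV x t"] assms by auto
  ultimately show ?thesis using Cons unfolding hpath_def by auto
qed (simp add: hpath_def)

lemma set_hpath: "finite (S t) \<Longrightarrow> set (hpath S t) = insert Z ((\<lambda>x. VV x t) ` S t)"
  by (simp add: hpath_def)

fun level :: "vtx \<Rightarrow> nat" where
  "level (UU i j) = 0" | "level (ZZ l) = 0" | "level (U i) = 1" | "level Z = 1"
| "level (UU' i j) = 2" | "level (VV i j) = 3 + i" | "level (VV' i j) = 4 + i"

locale dsc =
  fixes n m k :: nat and S :: "nat \<Rightarrow> nat set"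
  assumes S_sub: "\<forall>t\<in>{1..m}. S t \<subseteq> {1..n}"
    and S_cover: "(\<Union>t\<in>{1..m}. S t) = {1..n}"
    and k_ge: "1 \<le> k" and k_le: "k \<le> m"
begin

abbreviation "VS \<equiv> DSC_V n m S k"
abbreviation "AS \<equiv> DSC_A n m S k"
abbreviation "BS \<equiv> DSC_B n m S k"

lemma finite_S: "t \<in> {1..m} \<Longrightarrow> finite (S t)"
  using S_sub finite_subset by blast

lemma Iset_iff: "j \<in> Iset m S i \<longleftrightarrow> j \<in> {1..m} \<and> i \<in> S j"
  by (simp add: Iset_def)

lemma S_memD: "t \<in> {1..m} \<Longrightarrow> x \<in> S t \<Longrightarrow> x \<in> {1..n} \<and> t \<in> Iset m S x"
  using S_sub unfolding Iset_iff by blast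

lemma DSC_vertexE:
  assumes "x \<in> VS"
  obtains (u) i where "i \<in> {1..n}" "x = U i"
  | (vertical) i j where "i \<in> {1..n}" "j \<in> Iset m S i" "x \<in> set (vpath i j)"
  | (z) "x = Z"
  | (zz) t where "t \<in> {1..k}" "x = ZZ t"
  using assms unfolding DSC_V_def by blast

lemma set_vpath_subset_V: "i \<in> {1..n} \<Longrightarrow> j \<in> Iset m S i \<Longrightarrow> set (vpath i j) \<subseteq> VS"
  unfolding DSC_V_def by blast

lemma set_hpath_subset_V: "l \<in> {1..m} \<Longrightarrow> set (hpath S l) \<subseteq> VS"
proof
  fix y assume l: "l \<in> {1..m}" and "y \<in> set (hpath S l)"
  then consider "y = Z" | x where "x \<in> S l" "y = VV x l" using set_hpath[OF finite_S] by auto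
  then show "y \<in> VS"
  proof cases
    case 2
    with S_memD[OF l] set_vpath_subset_V show ?thesis by (fastforce simp: vpath_def)
  qed (simp add: DSC_V_def)
qed

abbreviation source :: "vtx \<Rightarrow> bool" where "source v \<equiv> 0 < BS v"

lemma source_iff:
  "source v \<longleftrightarrow> (\<exists>i\<in>{1..n}. \<exists>j\<in>Iset m S i. v = UU i j) \<or> (\<exists>l\<in>{1..k}. v = ZZ l)"
  by (simp add: DSC_B_def)

lemma DSC_B_le_1: "BS v \<le> 1"
  by (simp add: DSC_B_def)

lemma source_in_V: "source v \<Longrightarrow> v \<in> VS"
  unfolding source_iff DSC_V_def vpath_def by auto

lemma source_UU: "i \<in> {1..n} \<Longrightarrow> j \<in> Iset m S i \<Longrightarrow> source (UU i j)"
  by (auto simp: source_iff)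

lemma source_ZZ: "t \<in> {1..k} \<Longrightarrow> source (ZZ t)"
  by (simp add: source_iff)

lemma DSC_arcE:
  assumes "(a, b) \<in> AS"
  obtains (vertical) i j where "i \<in> {1..n}" "j \<in> Iset m S i" "(a, b) \<in> walk_arcs (vpath i j)"
  | (entry) t x where "t \<in> {1..m}" "x \<in> S t" "(a, b) = (Z, VV x t)"
  | (horizontal) t x y where "t \<in> {1..m}" "x \<in> S t" "y \<in> S t" "x < y" "(a, b) = (VV x t, VV y t)"
  | (start) l where "l \<in> {1..k}" "(a, b) = (ZZ l, Z)"
proof -
  consider (v) "(a, b) \<in> (\<Union>i\<in>{1..n}. \<Union>j\<in>Iset m S i. walk_arcs (vpath i j))"
    | (h) t where "t \<in> {1..m}" "(a, b) \<in> walk_arcs (hpath S t)"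
    | (z) "(a, b) \<in> (\<lambda>l. (ZZ l, Z)) ` {1..k}"
    using assms unfolding DSC_A_def by blast
  then show ?thesis
  proof cases
    case h
    with walk_arcs_hpath[of S t, OF finite_S[OF h(1)]] show ?thesis using that(2,3) by blast
  qed (use that(1,4) in blast)+
qed

lemma arc_to_UU': "(a, UU' x j) \<in> AS \<Longrightarrow> a = U x"
  by (elim DSC_arcE) auto

lemma arc_to_U: "(a, U x) \<in> AS \<Longrightarrow> \<exists>j\<in>Iset m S x. x \<in> {1..n} \<and> a = UU x j"
  by (elim DSC_arcE) auto

lemma arc_from_U: "(U x, b) \<in> AS \<Longrightarrow> \<exists>j\<in>Iset m S x. b = UU' x j"
  by (elim DSC_arcE) auto

lemma arc_from_UU': "(UU' x j, b) \<in> AS \<Longrightarrow> b = VV x j"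
  by (elim DSC_arcE) auto

lemma arc_to_VV': "(a, VV' x j) \<in> AS \<Longrightarrow> a = VV x j"
  by (elim DSC_arcE) auto

lemma no_arc_from_VV': "(VV' x j, b) \<notin> AS"
  by (auto elim: DSC_arcE)

lemma arc_to_Z: "(a, Z) \<in> AS \<Longrightarrow> \<exists>l\<in>{1..k}. a = ZZ l"
  by (elim DSC_arcE) auto

lemma arc_to_VV:
  "(a, VV y j) \<in> AS \<Longrightarrow> a = UU' y j \<or> a = Z \<or> (\<exists>x<y. a = VV x j)"
  by (elim DSC_arcE) auto

lemma source_level: "source v \<Longrightarrow> level v = 0"
  unfolding source_iff by auto

lemma level_arc: "(a, b) \<in> AS \<Longrightarrow> level a < level b"
  by (elim DSC_arcE) auto

lemma level_walk:
  assumes "is_walk VS AS w" "i \<le> j" "j < length w"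
  shows "level (w ! i) + (j - i) \<le> level (w ! j)"
  using assms(2,3)
proof (induction j)
  case (Suc j)
  show ?case
  proof (cases "i = Suc j")
    case False
    with Suc have "level (w ! i) + (j - i) \<le> level (w ! j)" "i \<le> j" by simp_all
    moreover have "(w ! j, w ! Suc j) \<in> AS" using assms(1) Suc.prems by (simp add: is_walk_def)
    ultimately show ?thesis using level_arc by fastforce
  qed simp
qed simp

lemma walk_nth_inj:
  assumes "is_walk VS AS w" "i < length w" "j < length w" "w ! i = w ! j"
  shows "i = j"
proof (rule ccontr)
  assume "i \<noteq> j"
  then consider "i < j" | "j < i" by linarith
  then show False
    using level_walk[OF assms(1), of i j] level_walk[OF assms(1), of j i] assms(2-4) by cases auto
qed

definition canonical_walks :: "(nat \<Rightarrow> nat) \<Rightarrow> vtx \<Rightarrow> nat \<Rightarrow> vtx list" where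
  "canonical_walks L v i = (case v of UU a b \<Rightarrow> vpath a b | ZZ t \<Rightarrow> ZZ t # hpath S (L t) | _ \<Rightarrow> [v])"

context
  fixes L :: "nat \<Rightarrow> nat"
  assumes L_range: "L ` {1..k} \<subseteq> {1..m}"
    and L_cover: "\<forall>i\<in>{1..n}. \<exists>t\<in>{1..k}. i \<in> S (L t)"
begin

abbreviation "W\<^sub>L \<equiv> canonical_walks L"
abbreviation "H\<^sub>L \<equiv> H_arcs VS BS W\<^sub>L"

lemma canonical_walk_is_walk: "source v \<Longrightarrow> is_walk VS AS (W\<^sub>L v i) \<and> hd (W\<^sub>L v i) = v"
  unfolding source_iff
proof (elim disjE bexE)
  fix a b assume ab: "a \<in> {1..n}" "b \<in> Iset m S a" "v = UU a b"
  have "walk_arcs (vpath a b) \<subseteq> AS" using ab unfolding DSC_A_def by blast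
  with ab set_vpath_subset_V[OF ab(1,2)] show ?thesis
    by (simp add: canonical_walks_def is_walk_iff_walk_arcs vpath_def)
next
  fix t assume t: "t \<in> {1..k}" "v = ZZ t"
  then have Lt: "L t \<in> {1..m}" using L_range by blast
  have "walk_arcs (ZZ t # hpath S (L t)) \<subseteq> AS"
    using t Lt unfolding DSC_A_def by (auto simp: hpath_def)
  with t set_hpath_subset_V[OF Lt] show ?thesis
    by (simp add: canonical_walks_def is_walk_iff_walk_arcs DSC_V_def)
qed

lemma canonical_walk_in_H:
  assumes "source v"
  shows "set (W\<^sub>L v 0) \<subseteq> H_vertices VS BS W\<^sub>L" "walk_arcs (W\<^sub>L v 0) \<subseteq> H\<^sub>L"
proof -
  have "v \<in> VS" "0 \<in> {..<BS v}" using assms source_in_V by auto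
  then show "set (W\<^sub>L v 0) \<subseteq> H_vertices VS BS W\<^sub>L" "walk_arcs (W\<^sub>L v 0) \<subseteq> H\<^sub>L"
    unfolding H_vertices_def H_arcs_def by (fastforce intro: UN_I)+
qed

lemma canonical_walk_connected:
  "source v \<Longrightarrow> x \<in> set (W\<^sub>L v 0) \<Longrightarrow> y \<in> set (W\<^sub>L v 0) \<Longrightarrow> (x, y) \<in> (H\<^sub>L \<union> H\<^sub>L\<inverse>)\<^sup>*"
  by (rule walk_vertices_connected[OF canonical_walk_in_H(2)])

lemma canonical_walk_ZZ: "W\<^sub>L (ZZ t) 0 = ZZ t # hpath S (L t)"
  by (simp add: canonical_walks_def)

lemma canonical_covers:
  assumes "x \<in> VS"
  shows "x \<in> H_vertices VS BS W\<^sub>L"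
  using assms
proof (cases rule: DSC_vertexE)
  case (u i)
  then obtain j where "j \<in> Iset m S i" using S_cover unfolding Iset_iff by blast
  with u canonical_walk_in_H(1)[OF source_UU] show ?thesis by (force simp: canonical_walks_def vpath_def)
next
  case (vertical i j)
  then show ?thesis using canonical_walk_in_H(1)[OF source_UU] by (force simp: canonical_walks_def)
next
  case z
  then show ?thesis using canonical_walk_in_H(1)[OF source_ZZ, of 1] k_ge by (auto simp: canonical_walk_ZZ hpath_def)
next
  case (zz t)
  then show ?thesis using canonical_walk_in_H(1)[OF source_ZZ] by (auto simp: canonical_walk_ZZ)
qed

lemma canonical_connects_U_to_Z:
  assumes "i \<in> {1..n}"
  shows "(U i, Z) \<in> (H\<^sub>L \<union> H\<^sub>L\<inverse>)\<^sup>*"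
proof -
  obtain t where t: "t \<in> {1..k}" "i \<in> S (L t)" using L_cover assms by blast
  then have Lt: "L t \<in> {1..m}" using L_range by blast
  with t have "L t \<in> Iset m S i" by (simp add: Iset_iff)
  then have "(U i, VV i (L t)) \<in> (H\<^sub>L \<union> H\<^sub>L\<inverse>)\<^sup>*"
    using canonical_walk_connected[OF source_UU[OF assms]] by (simp add: canonical_walks_def vpath_def)
  moreover have "(VV i (L t), Z) \<in> (H\<^sub>L \<union> H\<^sub>L\<inverse>)\<^sup>*"
    using canonical_walk_connected[OF source_ZZ[OF t(1)]] t(2) set_hpath[of S "L t", OF finite_S[OF Lt]]
    by (simp add: canonical_walk_ZZ)
  ultimately show ?thesis by (rule rtrancl_trans)
qed

lemma canonical_connects_to_Z:
  assumes "x \<in> VS"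
  shows "(x, Z) \<in> (H\<^sub>L \<union> H\<^sub>L\<inverse>)\<^sup>*"
  using assms
proof (cases rule: DSC_vertexE)
  case (u i)
  then show ?thesis using canonical_connects_U_to_Z by simp
next
  case (vertical i j)
  then have "(x, U i) \<in> (H\<^sub>L \<union> H\<^sub>L\<inverse>)\<^sup>*"
    using canonical_walk_connected[OF source_UU] by (simp add: canonical_walks_def vpath_def)
  then show ?thesis using canonical_connects_U_to_Z[OF vertical(1)] by (rule rtrancl_trans)
next
  case (zz t)
  then show ?thesis using canonical_walk_connected[OF source_ZZ] by (simp add: canonical_walk_ZZ hpath_def)
qed simp

lemma canonical_walks_solution: "st_solution VS AS DSC_F BS W\<^sub>L"
  unfolding st_solution_def
proof (intro conjI ballI allI impI)
  fix v i assume "i < BS v"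
  then show "is_walk VS AS (W\<^sub>L v i)" "hd (W\<^sub>L v i) = v" using canonical_walk_is_walk by auto
next
  fix x assume "x \<in> VS"
  then show "x \<in> H_vertices VS BS W\<^sub>L" by (rule canonical_covers)
next
  fix x y assume "x \<in> VS" "y \<in> VS"
  with canonical_connects_to_Z[of x] canonical_connects_to_Z[of y]
  show "(x, y) \<in> (H\<^sub>L \<union> H\<^sub>L\<inverse>)\<^sup>*" by (meson rtrancl_trans symcl_rtrancl_sym)
qed

end

end

locale dsc_solution = dsc +
  fixes W :: "vtx \<Rightarrow> nat \<Rightarrow> vtx list"
  assumes solution: "st_solution VS AS DSC_F BS W"
begin

abbreviation \<pi> :: "vtx \<Rightarrow> vtx list" where "\<pi> v \<equiv> W v 0"

abbreviation "H \<equiv> H_arcs VS BS W"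

lemma source_walk: "source v \<Longrightarrow> is_walk VS AS (\<pi> v)"
  using solution source_in_V unfolding st_solution_def by blast

lemma source_walk_nth_0: "source v \<Longrightarrow> \<pi> v ! 0 = v"
  using solution source_in_V source_walk unfolding st_solution_def is_walk_def
  by (metis hd_conv_nth)

lemma source_walk_arc:
  assumes "source v" "Suc q < length (\<pi> v)"
  shows "(\<pi> v ! q, \<pi> v ! Suc q) \<in> AS" "(\<pi> v ! q, \<pi> v ! Suc q) \<in> H"
proof -
  show "(\<pi> v ! q, \<pi> v ! Suc q) \<in> AS" using source_walk[OF assms(1)] assms(2) by (simp add: is_walk_def)
  have "(\<pi> v ! q, \<pi> v ! Suc q) \<in> walk_arcs (\<pi> v)" using assms(2) by (auto simp: walk_arcs_def)
  with assms(1) source_in_V show "(\<pi> v ! q, \<pi> v ! Suc q) \<in> H" unfolding H_arcs_def by blast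
qed

lemma vertex_on_source_walk:
  assumes "x \<in> VS"
  obtains v q where "source v" "q < length (\<pi> v)" "\<pi> v ! q = x"
proof -
  have "x \<in> H_vertices VS BS W" using solution assms unfolding st_solution_def DSC_F_def by blast
  then obtain v i where "i < BS v" "x \<in> set (W v i)" unfolding H_vertices_def by blast
  moreover from this have "i = 0" using DSC_B_le_1[of v] by simp
  ultimately show ?thesis using that by (metis gr_zeroI not_less0 in_set_conv_nth)
qed

lemma H_arcE:
  assumes "(a, b) \<in> H"
  obtains v q where "source v" "Suc q < length (\<pi> v)" "\<pi> v ! q = a" "\<pi> v ! Suc q = b"
proof -
  obtain v i where "i < BS v" "(a, b) \<in> walk_arcs (W v i)" using assms unfolding H_arcs_def by blast
  moreover from this have "i = 0" using DSC_B_le_1[of v] by simp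
  ultimately show ?thesis using that unfolding walk_arcs_def by fastforce
qed

lemma H_subset_A: "H \<subseteq> AS"
  by (auto elim!: H_arcE intro: source_walk_arc)

lemma index_le_level: "source v \<Longrightarrow> q < length (\<pi> v) \<Longrightarrow> q \<le> level (\<pi> v ! q)"
  using level_walk[OF source_walk, of v 0 q] source_walk_nth_0 source_level by simp

lemma source_walk_predecessor:
  assumes "source v" "q < length (\<pi> v)" "\<pi> v ! q = x" "\<not> source x"
  obtains p where "q = Suc p" "(\<pi> v ! p, x) \<in> AS"
proof (cases q)
  case 0
  then show ?thesis using assms source_walk_nth_0 by simp
next
  case (Suc p)
  then show ?thesis using that source_walk_arc(1)[OF assms(1), of p] assms(2,3) by simp
qed

lemma UU'_on_source_walk:
  assumes "source v" "q < length (\<pi> v)" "\<pi> v ! q = UU' x j"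
  shows "q = 2" "\<pi> v ! 1 = U x" "j \<in> Iset m S x" "\<exists>a\<in>Iset m S x. v = UU x a"
proof -
  obtain p where p: "q = Suc p" "(\<pi> v ! p, UU' x j) \<in> AS"
    using source_walk_predecessor[OF assms] by (auto simp: source_iff)
  then have U: "\<pi> v ! p = U x" using arc_to_UU' by blast
  obtain r where r: "p = Suc r" "(\<pi> v ! r, U x) \<in> AS"
    using source_walk_predecessor[OF assms(1) _ U] p assms(2) by (auto simp: source_iff)
  then obtain a where a: "a \<in> Iset m S x" "\<pi> v ! r = UU x a" using arc_to_U by blast
  have "r = 0" using index_le_level[OF assms(1,2)] assms(3) p(1) r(1) by simp
  then show "q = 2" "\<pi> v ! 1 = U x" "\<exists>a\<in>Iset m S x. v = UU x a"
    using p(1) r(1) U a source_walk_nth_0[OF assms(1)] by auto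
  show "j \<in> Iset m S x"
    using arc_from_U[of x "UU' x j"] source_walk_arc(1)[OF assms(1), of p] p(1) r(1) U assms(2,3) by auto
qed

lemma Z_on_source_walk:
  assumes "source v" "q < length (\<pi> v)" "\<pi> v ! q = Z"
  shows "q = 1" "\<exists>l\<in>{1..k}. v = ZZ l"
proof -
  obtain p where p: "q = Suc p" "(\<pi> v ! p, Z) \<in> AS"
    using source_walk_predecessor[OF assms] by (auto simp: source_iff)
  have "p = 0" using index_le_level[OF assms(1,2)] assms(3) p(1) by simp
  then show "q = 1" "\<exists>l\<in>{1..k}. v = ZZ l"
    using p arc_to_Z source_walk_nth_0[OF assms(1)] by auto
qed

lemma UU'_on_unique_walk:
  assumes "source v" "2 < length (\<pi> v)" "\<pi> v ! 2 = UU' x j"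
    and "source v'" "2 < length (\<pi> v')" "\<pi> v' ! 2 = UU' x j"
  shows "v = v'"
proof -
  let ?I = "Iset m S x"
  obtain a a' where a: "a \<in> ?I" "v = UU x a" and a': "a' \<in> ?I" "v' = UU x a'"
    using UU'_on_source_walk(4)[OF assms(1-3)] UU'_on_source_walk(4)[OF assms(4-6)] by blast
  have "UU' x ` ?I \<subseteq> (\<lambda>a. \<pi> (UU x a) ! 2) ` ?I"
  proof
    fix y assume "y \<in> UU' x ` ?I"
    then obtain b where b: "b \<in> ?I" "y = UU' x b" by blast
    then have "y \<in> VS" using UU'_on_source_walk(4)[OF assms(1-3)] source_in_V[OF assms(1)]
      unfolding DSC_V_def vpath_def by (force simp: Iset_iff)
    then obtain w q where "source w" "q < length (\<pi> w)" "\<pi> w ! q = y" by (rule vertex_on_source_walk)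
    with b UU'_on_source_walk[of w q x b] show "y \<in> (\<lambda>a. \<pi> (UU x a) ! 2) ` ?I" by force
  qed
  then have "inj_on (\<lambda>a. \<pi> (UU x a) ! 2) ?I"
    by (rule inj_on_if_image_covers[rotated]) (auto simp: Iset_def inj_on_def)
  then show ?thesis using a a' assms(3,6) by (simp add: inj_on_def)
qed

definition entered_columns :: "nat set" where
  "entered_columns = {l \<in> {1..m}. \<exists>x. (Z, VV x l) \<in> H}"

lemma card_entered_columns: "card entered_columns \<le> k"
proof -
  define col where "col t = (case \<pi> (ZZ t) ! 2 of VV x l \<Rightarrow> l | _ \<Rightarrow> 0)" for t
  have "entered_columns \<subseteq> col ` {1..k}"
  proof
    fix l assume "l \<in> entered_columns"
    then obtain x where "(Z, VV x l) \<in> H" unfolding entered_columns_def by blast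
    then obtain v q where vq: "source v" "Suc q < length (\<pi> v)" "\<pi> v ! q = Z" "\<pi> v ! Suc q = VV x l"
      by (rule H_arcE)
    with Z_on_source_walk[of v q] obtain t where "t \<in> {1..k}" "v = ZZ t" "q = 1" by auto
    with vq(4) show "l \<in> col ` {1..k}" by (auto simp: col_def numeral_2_eq_2 intro!: image_eqI[of _ _ t])
  qed
  then have "card entered_columns \<le> card (col ` {1..k})" by (simp add: card_mono)
  also have "\<dots> \<le> k" using card_image_le[of "{1..k}" col] by simp
  finally show ?thesis .
qed

lemma column_entry:
  assumes "source v" "p < length (\<pi> v)" "\<pi> v ! p = VV y j" "j \<notin> entered_columns"
  shows "\<exists>x\<le>y. x \<in> S j \<and> 2 < length (\<pi> v) \<and> \<pi> v ! 2 = UU' x j"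
  using assms(2,3)
proof (induction p arbitrary: y)
  case 0
  then show ?case using assms(1) source_walk_nth_0 by (auto simp: source_iff)
next
  case (Suc p)
  have arc: "(\<pi> v ! p, VV y j) \<in> AS" "(\<pi> v ! p, VV y j) \<in> H"
    using source_walk_arc[OF assms(1) Suc.prems(1)] Suc.prems(2) by simp_all
  from arc_to_VV[OF arc(1)] consider "\<pi> v ! p = UU' y j" | "\<pi> v ! p = Z" | x where "x < y" "\<pi> v ! p = VV x j"
    by blast
  then show ?case
  proof cases
    case 1
    with UU'_on_source_walk[OF assms(1), of p y j] Suc.prems show ?thesis by (auto simp: Iset_iff)
  next
    case 2
    have "j \<in> {1..m}" using arc(1) 2 by (elim DSC_arcE) auto
    with arc(2) 2 have "j \<in> entered_columns" by (auto simp: entered_columns_def)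
    with assms(4) show ?thesis by simp
  next
    case 3
    with Suc.IH[of x] Suc.prems show ?thesis by (auto intro: order.trans)
  qed
qed

lemma source_walk_through_UU'_and_VV':
  assumes "source v" "2 < length (\<pi> v)" "\<pi> v ! 2 = UU' x j"
    and "p < length (\<pi> v)" "\<pi> v ! p = VV' x j"
  shows "\<pi> v = [v, U x, UU' x j, VV x j, VV' x j]"
proof -
  obtain p0 where p0: "p = Suc p0" "(\<pi> v ! p0, VV' x j) \<in> AS"
    using source_walk_predecessor[OF assms(1,4,5)] by (auto simp: source_iff)
  then have VV: "\<pi> v ! p0 = VV x j" by (simp add: arc_to_VV')
  have "\<pi> v ! p0 \<notin> {\<pi> v ! 0, \<pi> v ! 1, \<pi> v ! 2}"
    using VV assms(1,3) UU'_on_source_walk(2)[OF assms(1-3)] source_walk_nth_0[OF assms(1)]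
    by (auto simp: source_iff)
  then have "p0 \<noteq> 0" "p0 \<noteq> 1" "p0 \<noteq> 2" by (metis insertCI)+
  then have "3 < length (\<pi> v)" using assms(4) p0(1) by linarith
  then have three: "\<pi> v ! 3 = VV x j"
    using source_walk_arc(1)[OF assms(1), of 2] assms(3) arc_from_UU' by (simp add: numeral_3_eq_3)
  with VV have "p0 = 3"
    using walk_nth_inj[OF source_walk[OF assms(1)], of p0 3] assms(4) p0(1) \<open>3 < length (\<pi> v)\<close> by simp
  then have four: "p = 4" "\<pi> v ! 4 = VV' x j" using p0(1) assms(5) by simp_all
  have "length (\<pi> v) = 5"
  proof (rule ccontr)
    assume "length (\<pi> v) \<noteq> 5"
    with assms(4) four(1) have "Suc 4 < length (\<pi> v)" by simp
    with four(2) source_walk_arc(1)[OF assms(1), of 4] show False by (simp add: no_arc_from_VV')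
  qed
  with source_walk_nth_0[OF assms(1)] UU'_on_source_walk(2)[OF assms(1-3)] assms(3) three four(2)
  show ?thesis by (intro nth_equalityI) (auto simp: less_Suc_eq numeral_eq_Suc)
qed

lemma walk_through_unentered_column:
  assumes "j \<notin> entered_columns" "source v" "2 < length (\<pi> v)" "\<pi> v ! 2 = UU' x j"
  shows "\<pi> v = [v, U x, UU' x j, VV x j, VV' x j]"
  using assms(2-4)
proof (induction x arbitrary: v rule: less_induct)
  case (less x)
  have "j \<in> Iset m S x" by (rule UU'_on_source_walk(3)[OF less.prems])
  moreover from this have "x \<in> {1..n}" using S_memD[of j x] by (simp add: Iset_iff)
  ultimately have "VV' x j \<in> VS" using set_vpath_subset_V by (auto simp: vpath_def)
  then obtain v' p where v': "source v'" "p < length (\<pi> v')" "\<pi> v' ! p = VV' x j"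
    by (rule vertex_on_source_walk)
  then obtain p0 where p0: "p = Suc p0" "(\<pi> v' ! p0, VV' x j) \<in> AS"
    by (rule source_walk_predecessor) (auto simp: source_iff)
  then have "\<pi> v' ! p0 = VV x j" by (simp add: arc_to_VV')
  moreover have "p0 < length (\<pi> v')" using v'(2) p0(1) by simp
  ultimately obtain x' where x': "x' \<le> x" "2 < length (\<pi> v')" "\<pi> v' ! 2 = UU' x' j"
    using column_entry[OF v'(1) _ _ assms(1)] by blast
  have "x' = x"
  proof (rule ccontr)
    assume "x' \<noteq> x"
    with x'(1) less.IH[OF _ v'(1) x'(2,3)] have "\<pi> v' = [v', U x', UU' x' j, VV x' j, VV' x' j]" by simp
    moreover have "VV' x j \<in> set (\<pi> v')" using v'(2,3) nth_mem by metis
    ultimately show False using \<open>x' \<noteq> x\<close> v'(1) by (auto simp: source_iff)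
  qed
  then have "v' = v" using UU'_on_unique_walk[OF v'(1) x'(2) _ less.prems] x'(3) by simp
  with v' less.prems show ?case by (intro source_walk_through_UU'_and_VV') simp_all
qed

lemma no_horizontal_H_arc_in_unentered_column:
  assumes "j \<notin> entered_columns" "(VV a j, VV b j) \<in> H"
  shows False
proof -
  obtain v q where vq: "source v" "Suc q < length (\<pi> v)" "\<pi> v ! q = VV a j" "\<pi> v ! Suc q = VV b j"
    using assms(2) by (rule H_arcE)
  then obtain x where "2 < length (\<pi> v)" "\<pi> v ! 2 = UU' x j"
    using column_entry[OF vq(1) _ vq(3) assms(1)] by auto
  with walk_through_unentered_column[OF assms(1) vq(1)]
  have "\<pi> v = [v, U x, UU' x j, VV x j, VV' x j]" by simp
  moreover have "(VV a j, VV b j) \<in> walk_arcs (\<pi> v)"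
    using vq(2-4) unfolding walk_arcs_def by force
  ultimately show False using vq(1) by (auto simp: source_iff)
qed

definition vertical_star :: "nat \<Rightarrow> vtx set" where
  "vertical_star i = insert (U i) (\<Union>j\<in>Iset m S i. set (vpath i j))"

lemma H_arc_stays_in_vertical_star:
  assumes "\<forall>l\<in>entered_columns. i \<notin> S l" "(a, b) \<in> H"
  shows "a \<in> vertical_star i \<longleftrightarrow> b \<in> vertical_star i"
proof -
  have "(a, b) \<in> AS" using assms(2) H_subset_A by blast
  then show ?thesis
  proof (cases rule: DSC_arcE)
    case (entry t x)
    with assms have "VV x t \<notin> vertical_star i"
      by (auto simp: vertical_star_def vpath_def entered_columns_def Iset_iff)
    with entry show ?thesis by (auto simp: vertical_star_def vpath_def)
  next
    case (horizontal t x y)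
    have "t \<notin> Iset m S i"
      using assms(1) no_horizontal_H_arc_in_unentered_column assms(2) horizontal(5)
      by (auto simp: Iset_iff)
    with horizontal show ?thesis by (auto simp: vertical_star_def vpath_def)
  qed (auto simp: vertical_star_def vpath_def)
qed

lemma entered_columns_cover: "i \<in> {1..n} \<Longrightarrow> \<exists>l\<in>entered_columns. i \<in> S l"
proof (rule ccontr)
  assume i: "i \<in> {1..n}" and "\<not> (\<exists>l\<in>entered_columns. i \<in> S l)"
  then have closed: "a \<in> vertical_star i \<longleftrightarrow> b \<in> vertical_star i" if "(a, b) \<in> H" for a b
    using H_arc_stays_in_vertical_star that by blast
  have "U i \<in> VS" "Z \<in> VS" using i unfolding DSC_V_def by auto
  with solution have "(U i, Z) \<in> (H \<union> H\<inverse>)\<^sup>*" unfolding st_solution_def DSC_F_def by blast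
  then have "Z \<in> vertical_star i"
    by (induction rule: rtrancl_induct) (auto simp: vertical_star_def dest: closed)
  then show False by (auto simp: vertical_star_def vpath_def)
qed

end

theorem lemma7:
  fixes n m k :: nat and S :: "nat \<Rightarrow> nat set"
  assumes S_sub: "\<forall>t\<in>{1..m}. S t \<subseteq> {1..n}"
    and S_cover: "(\<Union>t\<in>{1..m}. S t) = {1..n}"
    and k_ge: "1 \<le> k" and k_le: "k \<le> m"
    and pos: "st_positive (DSC_V n m S k) (DSC_A n m S k) DSC_F (DSC_B n m S k)"
  shows "\<exists>W. st_solution (DSC_V n m S k) (DSC_A n m S k) DSC_F (DSC_B n m S k) W
           \<and> (\<forall>i\<in>{1..n}. \<forall>j\<in>Iset m S i. W (UU i j) 0 = vpath i j)
           \<and> (\<forall>t\<in>{1..k}. \<exists>l\<in>{1..m}. W (ZZ t) 0 = ZZ t # hpath S l)"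
proof -
  obtain W where "st_solution (DSC_V n m S k) (DSC_A n m S k) DSC_F (DSC_B n m S k) W"
    using pos unfolding st_positive_def by blast
  with assms interpret dsc_solution n m k S W by unfold_locales auto
  have "entered_columns \<subseteq> {1..m}" "1 \<in> {1..m}"
    using k_ge k_le by (auto simp: entered_columns_def)
  then obtain L where L: "L ` {1..k} \<subseteq> {1..m}" "entered_columns \<subseteq> L ` {1..k}"
    using finite_set_covered_by_interval_image[OF finite_subset card_entered_columns]
    by (metis finite_atLeastAtMost)
  have "\<exists>t\<in>{1..k}. i \<in> S (L t)" if "i \<in> {1..n}" for i
    using entered_columns_cover[OF that] L(2) by fast
  with L(1) have "st_solution VS AS DSC_F BS (canonical_walks L)"
    by (intro canonical_walks_solution) auto
  moreover have "\<forall>t\<in>{1..k}. \<exists>l\<in>{1..m}. canonical_walks L (ZZ t) 0 = ZZ t # hpath S l"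
    using L(1) by (auto simp: canonical_walks_def)
  ultimately show ?thesis by (intro exI[of _ "canonical_walks L"]) (simp add: canonical_walks_def)
qed

end
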